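(* Let $A$ be an approximately unital operator algebra and let $Y$ be an operator space which is also a right $A$-module. Suppose there exist $A$-Hilbertian modules $Y_\alpha$ (indexed by a directed set) and completely contractive right $A$-module maps $\varphi_\alpha:Y\to Y_\alpha$ and $\psi_\alpha:Y_\alpha\to Y$ such that $\psi_\alpha\varphi_\alpha\to I_Y$ strongly on $Y$ (i.e. $\psi_\alpha(\varphi_\alpha(y))\to y$ in norm for each $y\in Y$). Then $Y$ is $A$-Hilbertian.
   Context: An operator algebra is a norm-closed subalgebra of $B(H)$; approximately unital means it has a contractive approximate identity. For a positive integer $n$, $C_n(A)$ denotes the space of $n\times 1$ columns with entries in $A$, with its operator space structure as the first column of $M_n(A)$ and its natural right $A$-module action. An operator space $Y$ which is a right $A$-module is called $A$-Hilbertian if there exist a net of positive integers $n_\alpha$ and completely contractive right $A$-module maps $\varphi_\alpha:Y\to C_{n_\alpha}(A)$ and $\psi_\alpha:C_{n_\alpha}(A)\to Y$ with $\psi_\alpha\varphi_\alpha\to I_Y$ strongly on $Y$. *)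

theory Defs
  imports Complex_Main
begin

text \<open>An n x n matrix over the space is a function
nat => nat => 'v whose entries with indices < n lie in the carrier and which is
zero outside the n x n block.\<close>

record 'v mspace =
  carrier :: "'v set"
  vadd :: "'v \<Rightarrow> 'v \<Rightarrow> 'v"
  vzero :: "'v"
  smul :: "complex \<Rightarrow> 'v \<Rightarrow> 'v"
  mnorm :: "nat \<Rightarrow> (nat \<Rightarrow> nat \<Rightarrow> 'v) \<Rightarrow> real"

record ('v, 'a) rmodule = "'v mspace" + ract :: "'v \<Rightarrow> 'a \<Rightarrow> 'v"

record 'a opalg = "'a mspace" + amul :: "'a \<Rightarrow> 'a \<Rightarrow> 'a"

definition vdiff :: "('v, 'b) mspace_scheme \<Rightarrow> 'v \<Rightarrow> 'v \<Rightarrow> 'v" where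
  "vdiff X x y = vadd X x (smul X (-1) y)"

definition vsum :: "('v, 'b) mspace_scheme \<Rightarrow> nat \<Rightarrow> (nat \<Rightarrow> 'v) \<Rightarrow> 'v" where
  "vsum X n f = foldr (\<lambda>k acc. vadd X (f k) acc) [0..<n] (vzero X)"

definition complex_vs :: "('v, 'b) mspace_scheme \<Rightarrow> bool" where
  "complex_vs X \<longleftrightarrow>
     vzero X \<in> carrier X \<and>
     (\<forall>x\<in>carrier X. \<forall>y\<in>carrier X. vadd X x y \<in> carrier X) \<and>
     (\<forall>c. \<forall>x\<in>carrier X. smul X c x \<in> carrier X) \<and>
     (\<forall>x\<in>carrier X. \<forall>y\<in>carrier X. \<forall>z\<in>carrier X.
         vadd X (vadd X x y) z = vadd X x (vadd X y z)) \<and>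
     (\<forall>x\<in>carrier X. \<forall>y\<in>carrier X. vadd X x y = vadd X y x) \<and>
     (\<forall>x\<in>carrier X. vadd X (vzero X) x = x) \<and>
     (\<forall>x\<in>carrier X. vadd X x (smul X (-1) x) = vzero X) \<and>
     (\<forall>x\<in>carrier X. smul X 1 x = x) \<and>
     (\<forall>a b. \<forall>x\<in>carrier X. smul X a (smul X b x) = smul X (a * b) x) \<and>
     (\<forall>a b. \<forall>x\<in>carrier X. smul X (a + b) x = vadd X (smul X a x) (smul X b x)) \<and>
     (\<forall>a. \<forall>x\<in>carrier X. \<forall>y\<in>carrier X.
         smul X a (vadd X x y) = vadd X (smul X a x) (smul X a y))"

definition mats :: "('v, 'b) mspace_scheme \<Rightarrow> nat \<Rightarrow> (nat \<Rightarrow> nat \<Rightarrow> 'v) set" where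
  "mats X n = {x. \<forall>i j. if i < n \<and> j < n then x i j \<in> carrier X else x i j = vzero X}"

definition zmat :: "('v, 'b) mspace_scheme \<Rightarrow> nat \<Rightarrow> nat \<Rightarrow> 'v" where
  "zmat X = (\<lambda>i j. vzero X)"

definition madd :: "('v, 'b) mspace_scheme \<Rightarrow> (nat \<Rightarrow> nat \<Rightarrow> 'v) \<Rightarrow> (nat \<Rightarrow> nat \<Rightarrow> 'v) \<Rightarrow> nat \<Rightarrow> nat \<Rightarrow> 'v" where
  "madd X x y = (\<lambda>i j. vadd X (x i j) (y i j))"

definition mscale :: "('v, 'b) mspace_scheme \<Rightarrow> complex \<Rightarrow> (nat \<Rightarrow> nat \<Rightarrow> 'v) \<Rightarrow> nat \<Rightarrow> nat \<Rightarrow> 'v" where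
  "mscale X c x = (\<lambda>i j. smul X c (x i j))"

definition cmat_norm :: "nat \<Rightarrow> nat \<Rightarrow> (nat \<Rightarrow> nat \<Rightarrow> complex) \<Rightarrow> real" where
  "cmat_norm n m \<alpha> = Sup {sqrt (\<Sum>i<n. (cmod (\<Sum>j<m. \<alpha> i j * z j))\<^sup>2) | z.
                               (\<Sum>j<m. (cmod (z j))\<^sup>2) \<le> 1}"

definition lrmul :: "('v, 'b) mspace_scheme \<Rightarrow> nat \<Rightarrow> nat \<Rightarrow> (nat \<Rightarrow> nat \<Rightarrow> complex) \<Rightarrow>
    (nat \<Rightarrow> nat \<Rightarrow> 'v) \<Rightarrow> (nat \<Rightarrow> nat \<Rightarrow> complex) \<Rightarrow> nat \<Rightarrow> nat \<Rightarrow> 'v" where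
  "lrmul X n m \<alpha> x \<beta> = (\<lambda>i j. if i < n \<and> j < n then
       vsum X m (\<lambda>k. vsum X m (\<lambda>l. smul X (\<alpha> i k * \<beta> l j) (x k l))) else vzero X)"

definition dsum :: "('v, 'b) mspace_scheme \<Rightarrow> nat \<Rightarrow> nat \<Rightarrow> (nat \<Rightarrow> nat \<Rightarrow> 'v) \<Rightarrow>
    (nat \<Rightarrow> nat \<Rightarrow> 'v) \<Rightarrow> nat \<Rightarrow> nat \<Rightarrow> 'v" where
  "dsum X n m x y = (\<lambda>i j. if i < n \<and> j < n then x i j
       else if n \<le> i \<and> i < n + m \<and> n \<le> j \<and> j < n + m then y (i - n) (j - n)
       else vzero X)"

text \<open>Abstract operator space (Ruan's axioms): each matrix norm is a norm, plus (R1) and (R2).\<close>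
definition operator_space :: "('v, 'b) mspace_scheme \<Rightarrow> bool" where
  "operator_space X \<longleftrightarrow> complex_vs X \<and>
     (\<forall>n\<ge>1. \<forall>x\<in>mats X n. (mnorm X n x = 0 \<longleftrightarrow> x = zmat X)) \<and>
     (\<forall>n\<ge>1. \<forall>x\<in>mats X n. \<forall>y\<in>mats X n. mnorm X n (madd X x y) \<le> mnorm X n x + mnorm X n y) \<and>
     (\<forall>n\<ge>1. \<forall>c. \<forall>x\<in>mats X n. mnorm X n (mscale X c x) = cmod c * mnorm X n x) \<and>
     (\<forall>n\<ge>1. \<forall>m\<ge>1. \<forall>\<alpha> \<beta>. \<forall>x\<in>mats X m.
        mnorm X n (lrmul X n m \<alpha> x \<beta>) \<le> cmat_norm n m \<alpha> * mnorm X m x * cmat_norm m n \<beta>) \<and>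
     (\<forall>n\<ge>1. \<forall>m\<ge>1. \<forall>x\<in>mats X n. \<forall>y\<in>mats X m.
        mnorm X (n + m) (dsum X n m x y) = max (mnorm X n x) (mnorm X m y))"

definition vnorm :: "('v, 'b) mspace_scheme \<Rightarrow> 'v \<Rightarrow> real" where
  "vnorm X v = mnorm X 1 (\<lambda>i j. if i = 0 \<and> j = 0 then v else vzero X)"

definition complete_space_on :: "('v, 'b) mspace_scheme \<Rightarrow> bool" where
  "complete_space_on X \<longleftrightarrow>
     (\<forall>s :: nat \<Rightarrow> 'v. (\<forall>k. s k \<in> carrier X) \<and>
          (\<forall>\<epsilon>>0. \<exists>N. \<forall>p\<ge>N. \<forall>q\<ge>N. vnorm X (vdiff X (s p) (s q)) < \<epsilon>) \<longrightarrow>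
          (\<exists>l\<in>carrier X. \<forall>\<epsilon>>0. \<exists>N. \<forall>p\<ge>N. vnorm X (vdiff X (s p) l) < \<epsilon>))"

definition clinear_map :: "('v, 'b) mspace_scheme \<Rightarrow> ('w, 'c) mspace_scheme \<Rightarrow> ('v \<Rightarrow> 'w) \<Rightarrow> bool" where
  "clinear_map X Z T \<longleftrightarrow>
     (\<forall>x\<in>carrier X. T x \<in> carrier Z) \<and>
     (\<forall>x\<in>carrier X. \<forall>y\<in>carrier X. T (vadd X x y) = vadd Z (T x) (T y)) \<and>
     (\<forall>c. \<forall>x\<in>carrier X. T (smul X c x) = smul Z c (T x))"

definition matmap :: "('w, 'c) mspace_scheme \<Rightarrow> nat \<Rightarrow> ('v \<Rightarrow> 'w) \<Rightarrow> (nat \<Rightarrow> nat \<Rightarrow> 'v) \<Rightarrow> nat \<Rightarrow> nat \<Rightarrow> 'w" where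
  "matmap Z n T x = (\<lambda>i j. if i < n \<and> j < n then T (x i j) else vzero Z)"

definition completely_contractive :: "('v, 'b) mspace_scheme \<Rightarrow> ('w, 'c) mspace_scheme \<Rightarrow> ('v \<Rightarrow> 'w) \<Rightarrow> bool" where
  "completely_contractive X Z T \<longleftrightarrow> clinear_map X Z T \<and>
     (\<forall>n\<ge>1. \<forall>x\<in>mats X n. mnorm Z n (matmap Z n T x) \<le> mnorm X n x)"

definition matprod :: "'a opalg \<Rightarrow> nat \<Rightarrow> (nat \<Rightarrow> nat \<Rightarrow> 'a) \<Rightarrow> (nat \<Rightarrow> nat \<Rightarrow> 'a) \<Rightarrow> nat \<Rightarrow> nat \<Rightarrow> 'a" where
  "matprod A n x y = (\<lambda>i j. if i < n \<and> j < n then vsum A n (\<lambda>k. amul A (x i k) (y k j)) else vzero A)"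

text \<open>Operator algebra, abstractly: a complete operator space with an associative bilinear
completely contractive multiplication (Blecher's characterization of norm-closed subalgebras
of B(H) up to complete isometric isomorphism).\<close>
definition operator_algebra :: "'a opalg \<Rightarrow> bool" where
  "operator_algebra A \<longleftrightarrow> operator_space A \<and> complete_space_on A \<and>
     (\<forall>a\<in>carrier A. \<forall>b\<in>carrier A. amul A a b \<in> carrier A) \<and>
     (\<forall>a\<in>carrier A. \<forall>b\<in>carrier A. \<forall>c\<in>carrier A. amul A (amul A a b) c = amul A a (amul A b c)) \<and>
     (\<forall>a\<in>carrier A. \<forall>b\<in>carrier A. \<forall>c\<in>carrier A.
        amul A a (vadd A b c) = vadd A (amul A a b) (amul A a c) \<and>
        amul A (vadd A a b) c = vadd A (amul A a c) (amul A b c)) \<and>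
     (\<forall>z. \<forall>a\<in>carrier A. \<forall>b\<in>carrier A.
        amul A (smul A z a) b = smul A z (amul A a b) \<and> amul A a (smul A z b) = smul A z (amul A a b)) \<and>
     (\<forall>n\<ge>1. \<forall>x\<in>mats A n. \<forall>y\<in>mats A n. mnorm A n (matprod A n x y) \<le> mnorm A n x * mnorm A n y)"

text \<open>Contractive approximate identity: a net (here a proper filter on A) of elements of
norm at most one with a e -> a and e a -> a in norm for every a.\<close>
definition approx_unital :: "'a opalg \<Rightarrow> bool" where
  "approx_unital A \<longleftrightarrow> (\<exists>F :: 'a filter. F \<noteq> bot \<and>
     eventually (\<lambda>e. e \<in> carrier A \<and> vnorm A e \<le> 1) F \<and>
     (\<forall>a\<in>carrier A. \<forall>\<epsilon>>0. eventually (\<lambda>e.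
        vnorm A (vdiff A (amul A a e) a) < \<epsilon> \<and> vnorm A (vdiff A (amul A e a) a) < \<epsilon>) F))"

definition rmodule_over :: "'a opalg \<Rightarrow> ('y, 'a) rmodule \<Rightarrow> bool" where
  "rmodule_over A Y \<longleftrightarrow> operator_space Y \<and>
     (\<forall>y\<in>carrier Y. \<forall>a\<in>carrier A. ract Y y a \<in> carrier Y) \<and>
     (\<forall>y\<in>carrier Y. \<forall>z\<in>carrier Y. \<forall>a\<in>carrier A. ract Y (vadd Y y z) a = vadd Y (ract Y y a) (ract Y z a)) \<and>
     (\<forall>y\<in>carrier Y. \<forall>a\<in>carrier A. \<forall>b\<in>carrier A. ract Y y (vadd A a b) = vadd Y (ract Y y a) (ract Y y b)) \<and>
     (\<forall>c. \<forall>y\<in>carrier Y. \<forall>a\<in>carrier A.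
        ract Y (smul Y c y) a = smul Y c (ract Y y a) \<and> ract Y y (smul A c a) = smul Y c (ract Y y a)) \<and>
     (\<forall>y\<in>carrier Y. \<forall>a\<in>carrier A. \<forall>b\<in>carrier A. ract Y (ract Y y a) b = ract Y y (amul A a b))"

definition module_map :: "'a opalg \<Rightarrow> ('y, 'a) rmodule \<Rightarrow> ('z, 'a) rmodule \<Rightarrow> ('y \<Rightarrow> 'z) \<Rightarrow> bool" where
  "module_map A Y Z T \<longleftrightarrow> (\<forall>y\<in>carrier Y. \<forall>a\<in>carrier A. T (ract Y y a) = ract Z (T y) a)"

definition cc_module_map :: "'a opalg \<Rightarrow> ('y, 'a) rmodule \<Rightarrow> ('z, 'a) rmodule \<Rightarrow> ('y \<Rightarrow> 'z) \<Rightarrow> bool" where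
  "cc_module_map A Y Z T \<longleftrightarrow> completely_contractive Y Z T \<and> module_map A Y Z T"

text \<open>An m x m matrix X over C_n(A) is normed as the element of M_m(M_n(A)) = M_(mn)(A)
whose (k,l) block is the n x n matrix with first column X k l and zeros elsewhere; row index
k*n+i, column index l*n+j.\<close>
definition col_space :: "'a opalg \<Rightarrow> nat \<Rightarrow> (nat \<Rightarrow> 'a, 'a) rmodule" where
  "col_space A n = \<lparr>
     carrier = {c. \<forall>i. if i < n then c i \<in> carrier A else c i = vzero A},
     vadd = (\<lambda>c d i. vadd A (c i) (d i)),
     vzero = (\<lambda>i. vzero A),
     smul = (\<lambda>z c i. smul A z (c i)),
     mnorm = (\<lambda>m X. mnorm A (m * n) (\<lambda>r s.
        if r < m * n \<and> s < m * n \<and> s mod n = 0 then X (r div n) (s div n) (r mod n) else vzero A)),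
     ract = (\<lambda>c a i. if i < n then amul A (c i) a else vzero A) \<rparr>"

text \<open>A net (n_t, phi_t, psi_t) is represented, as usual in Isabelle, by a proper filter on the
set of triples; "eventually" replaces "for t beyond some index".\<close>
definition hilbertian :: "'a opalg \<Rightarrow> ('y, 'a) rmodule \<Rightarrow> bool" where
  "hilbertian A Y \<longleftrightarrow>
     (\<exists>F :: (nat \<times> ('y \<Rightarrow> nat \<Rightarrow> 'a) \<times> ((nat \<Rightarrow> 'a) \<Rightarrow> 'y)) filter. F \<noteq> bot \<and>
        eventually (\<lambda>(n, \<phi>, \<psi>). n \<ge> 1 \<and> cc_module_map A Y (col_space A n) \<phi> \<and>
                                  cc_module_map A (col_space A n) Y \<psi>) F \<and>
        (\<forall>y\<in>carrier Y. \<forall>\<epsilon>>0. eventually (\<lambda>(n, \<phi>, \<psi>). vnorm Y (vdiff Y (\<psi> (\<phi> y)) y) < \<epsilon>) F))"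

end

theory Submission
  imports Defs
begin

text \<open>Being A-Hilbertian only asks that, for every finite S in Y and epsilon > 0, some
factorisation Y -> C_n(A) -> Y through completely contractive module maps moves every point of S
by less than epsilon; the net is then assembled from these finitely many conditions.  Given S,
choose alpha with psi_alpha phi_alpha within epsilon/2 of the identity on S, and a factorisation
of Y_alpha through some C_n(A) within epsilon/2 of the identity on phi_alpha(S).  Composing it
with phi_alpha and psi_alpha factors Y through C_n(A), and since psi_alpha is contractive the
errors add up to less than epsilon.\<close>

lemma complex_vsD:
  assumes "complex_vs X"
  shows complex_vs_vzero: "vzero X \<in> carrier X"
    and complex_vs_vadd: "x \<in> carrier X \<Longrightarrow> y \<in> carrier X \<Longrightarrow> vadd X x y \<in> carrier X"
    and complex_vs_smul: "x \<in> carrier X \<Longrightarrow> smul X c x \<in> carrier X"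
    and complex_vs_assoc: "x \<in> carrier X \<Longrightarrow> y \<in> carrier X \<Longrightarrow> z \<in> carrier X \<Longrightarrow>
      vadd X (vadd X x y) z = vadd X x (vadd X y z)"
    and complex_vs_commute: "x \<in> carrier X \<Longrightarrow> y \<in> carrier X \<Longrightarrow> vadd X x y = vadd X y x"
    and complex_vs_left_zero: "x \<in> carrier X \<Longrightarrow> vadd X (vzero X) x = x"
    and complex_vs_right_neg: "x \<in> carrier X \<Longrightarrow> vadd X x (smul X (-1) x) = vzero X"
  using assms unfolding complex_vs_def by auto

lemma operator_space_complex_vs: "operator_space X \<Longrightarrow> complex_vs X"
  unfolding operator_space_def by simp

lemma rmodule_over_operator_space: "rmodule_over A Y \<Longrightarrow> operator_space Y"
  unfolding rmodule_over_def by simp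

lemma vdiff_closed:
  assumes "complex_vs X" "x \<in> carrier X" "y \<in> carrier X"
  shows "vdiff X x y \<in> carrier X"
  unfolding vdiff_def using assms by (simp add: complex_vs_vadd complex_vs_smul)

lemma vdiff_telescope:
  assumes X: "complex_vs X" and x: "x \<in> carrier X" and y: "y \<in> carrier X" and z: "z \<in> carrier X"
  shows "vdiff X x z = vadd X (vdiff X x y) (vdiff X y z)"
proof -
  let ?neg = "smul X (-1)"
  have neg_y: "?neg y \<in> carrier X" and neg_z: "?neg z \<in> carrier X"
    using X y z by (simp_all add: complex_vs_smul)
  have "vadd X (vdiff X x y) (vdiff X y z) = vadd X x (vadd X (vadd X (?neg y) y) (?neg z))"
    unfolding vdiff_def using X x y z neg_y neg_z
    by (simp add: complex_vs_assoc complex_vs_vadd)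
  also have "vadd X (?neg y) y = vzero X"
    using X y neg_y by (simp add: complex_vs_commute complex_vs_right_neg)
  finally show ?thesis
    unfolding vdiff_def using X neg_z by (simp add: complex_vs_left_zero)
qed

lemma clinear_map_vdiff:
  assumes "clinear_map X Z T" "complex_vs X" "x \<in> carrier X" "y \<in> carrier X"
  shows "T (vdiff X x y) = vdiff Z (T x) (T y)"
  using assms unfolding clinear_map_def vdiff_def by (simp add: complex_vs_smul)

lemma operator_space_mnorm_triangle:
  "operator_space X \<Longrightarrow> n \<ge> 1 \<Longrightarrow> x \<in> mats X n \<Longrightarrow> y \<in> mats X n \<Longrightarrow>
    mnorm X n (madd X x y) \<le> mnorm X n x + mnorm X n y"
  unfolding operator_space_def by blast

lemma completely_contractive_mnorm_le:
  "completely_contractive X Z T \<Longrightarrow> n \<ge> 1 \<Longrightarrow> x \<in> mats X n \<Longrightarrow>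
    mnorm Z n (matmap Z n T x) \<le> mnorm X n x"
  unfolding completely_contractive_def by blast

lemma vnorm_add_le:
  assumes "operator_space X" "x \<in> carrier X" "y \<in> carrier X"
  shows "vnorm X (vadd X x y) \<le> vnorm X x + vnorm X y"
proof -
  let ?entry = "\<lambda>v. (\<lambda>i j. if i = 0 \<and> j = 0 then v else vzero X)"
  have X: "complex_vs X" using assms(1) by (rule operator_space_complex_vs)
  have sum: "madd X (?entry x) (?entry y) = ?entry (vadd X x y)"
    unfolding madd_def using X by (auto simp: fun_eq_iff complex_vs_left_zero complex_vs_vzero)
  have "mnorm X 1 (madd X (?entry x) (?entry y)) \<le> mnorm X 1 (?entry x) + mnorm X 1 (?entry y)"
    using assms(2,3) by (intro operator_space_mnorm_triangle[OF assms(1)]) (auto simp: mats_def)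
  then show ?thesis unfolding vnorm_def sum .
qed

lemma completely_contractive_vnorm_le:
  assumes "completely_contractive X Z T" "x \<in> carrier X"
  shows "vnorm Z (T x) \<le> vnorm X x"
proof -
  let ?entry = "\<lambda>v. (\<lambda>i j. if i = 0 \<and> j = 0 then v else vzero X)"
  have image: "matmap Z 1 T (?entry x) = (\<lambda>i j. if i = 0 \<and> j = 0 then T x else vzero Z)"
    unfolding matmap_def by (auto simp: fun_eq_iff)
  have "mnorm Z 1 (matmap Z 1 T (?entry x)) \<le> mnorm X 1 (?entry x)"
    using assms(2) by (intro completely_contractive_mnorm_le[OF assms(1)]) (auto simp: mats_def)
  then show ?thesis unfolding vnorm_def image .
qed

lemma matmap_comp:
  "matmap Z n (T \<circ> S) x = matmap Z n T (matmap W n S x)"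
  unfolding matmap_def by (auto simp: fun_eq_iff)

lemma matmap_mats:
  "clinear_map X Z T \<Longrightarrow> x \<in> mats X n \<Longrightarrow> matmap Z n T x \<in> mats Z n"
  unfolding clinear_map_def mats_def matmap_def by auto

lemma cc_module_map_carrier:
  "cc_module_map A X Z T \<Longrightarrow> x \<in> carrier X \<Longrightarrow> T x \<in> carrier Z"
  unfolding cc_module_map_def completely_contractive_def clinear_map_def by simp

lemma cc_module_map_comp:
  assumes S: "cc_module_map A X W S" and T: "cc_module_map A W Z T"
  shows "cc_module_map A X Z (T \<circ> S)"
proof -
  have "clinear_map X Z (T \<circ> S)"
    using S T unfolding cc_module_map_def completely_contractive_def clinear_map_def by simp
  moreover have "mnorm Z n (matmap Z n (T \<circ> S) x) \<le> mnorm X n x" if "n \<ge> 1" "x \<in> mats X n" for n x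
  proof -
    have "matmap W n S x \<in> mats W n"
      using S that(2) unfolding cc_module_map_def completely_contractive_def by (blast intro: matmap_mats)
    then have "mnorm Z n (matmap Z n T (matmap W n S x)) \<le> mnorm W n (matmap W n S x)"
      using T that(1) unfolding cc_module_map_def by (blast intro: completely_contractive_mnorm_le)
    also have "\<dots> \<le> mnorm X n x"
      using S that unfolding cc_module_map_def by (blast intro: completely_contractive_mnorm_le)
    finally show ?thesis unfolding matmap_comp[where W = W] .
  qed
  moreover have "module_map A X Z (T \<circ> S)"
    using S T unfolding cc_module_map_def completely_contractive_def clinear_map_def module_map_def
    by simp
  ultimately show ?thesis unfolding cc_module_map_def completely_contractive_def by blast
qed

lemma completely_contractive_vnorm_vdiff_le:
  assumes Y: "operator_space Y" and Z: "complex_vs Z" and T: "completely_contractive Z Y T"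
    and w: "w \<in> carrier Z" and z: "z \<in> carrier Z" and y: "y \<in> carrier Y"
  shows "vnorm Y (vdiff Y (T w) y) \<le> vnorm Z (vdiff Z w z) + vnorm Y (vdiff Y (T z) y)"
proof -
  have T_lin: "clinear_map Z Y T" using T unfolding completely_contractive_def by simp
  then have Tw: "T w \<in> carrier Y" and Tz: "T z \<in> carrier Y"
    using w z unfolding clinear_map_def by simp_all
  have Y_vs: "complex_vs Y" using Y by (rule operator_space_complex_vs)
  have "vdiff Y (T w) y = vadd Y (T (vdiff Z w z)) (vdiff Y (T z) y)"
    using vdiff_telescope[OF Y_vs Tw Tz y] clinear_map_vdiff[OF T_lin Z w z] by simp
  then have "vnorm Y (vdiff Y (T w) y) \<le> vnorm Y (T (vdiff Z w z)) + vnorm Y (vdiff Y (T z) y)"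
    using vnorm_add_le[OF Y] T_lin Y_vs Z w z y Tz
    by (simp add: vdiff_closed clinear_map_def)
  also have "vnorm Y (T (vdiff Z w z)) \<le> vnorm Z (vdiff Z w z)"
    using completely_contractive_vnorm_le[OF T] vdiff_closed[OF Z w z] .
  finally show ?thesis by simp
qed

lemma proper_filter_if_finite_intersection:
  assumes "\<And>S. S \<subseteq> K \<Longrightarrow> finite S \<Longrightarrow> \<exists>b. Q b \<and> (\<forall>k\<in>S. P k b)"
  shows "\<exists>F. F \<noteq> bot \<and> eventually Q F \<and> (\<forall>k\<in>K. eventually (P k) F)"
proof -
  define F where "F = (INF S\<in>{S. S \<subseteq> K \<and> finite S}. principal {b. Q b \<and> (\<forall>k\<in>S. P k b)})"
  have eventually_F: "eventually R F \<longleftrightarrow>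
      (\<exists>S. S \<subseteq> K \<and> finite S \<and> (\<forall>b. Q b \<and> (\<forall>k\<in>S. P k b) \<longrightarrow> R b))" for R
    unfolding F_def
  proof (subst eventually_INF_base)
    fix S T assume "S \<in> {S. S \<subseteq> K \<and> finite S}" "T \<in> {S. S \<subseteq> K \<and> finite S}"
    then show "\<exists>U\<in>{S. S \<subseteq> K \<and> finite S}. principal {b. Q b \<and> (\<forall>k\<in>U. P k b)} \<le>
        inf (principal {b. Q b \<and> (\<forall>k\<in>S. P k b)}) (principal {b. Q b \<and> (\<forall>k\<in>T. P k b)})"
      by (intro bexI[of _ "S \<union> T"]) auto
  qed (auto simp: eventually_principal)
  have "F \<noteq> bot"
    using assms by (auto simp: trivial_limit_def eventually_F)
  moreover have "eventually Q F"
    by (auto simp: eventually_F intro!: exI[of _ "{}"])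
  moreover have "eventually (P k) F" if "k \<in> K" for k
    using that by (auto simp: eventually_F intro!: exI[of _ "{k}"])
  ultimately show ?thesis by blast
qed

definition column_approximation :: "'a opalg \<Rightarrow> ('y, 'a) rmodule \<Rightarrow> 'y set \<Rightarrow> real \<Rightarrow>
    nat \<Rightarrow> ('y \<Rightarrow> nat \<Rightarrow> 'a) \<Rightarrow> ((nat \<Rightarrow> 'a) \<Rightarrow> 'y) \<Rightarrow> bool" where
  "column_approximation A Y S \<epsilon> n \<phi> \<psi> \<longleftrightarrow>
     n \<ge> 1 \<and> cc_module_map A Y (col_space A n) \<phi> \<and> cc_module_map A (col_space A n) Y \<psi> \<and>
     (\<forall>y\<in>S. vnorm Y (vdiff Y (\<psi> (\<phi> y)) y) < \<epsilon>)"

lemma hilbertian_iff_column_approximations: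
  fixes Y :: "('y, 'a) rmodule"
  shows "hilbertian A Y \<longleftrightarrow> (\<forall>S \<epsilon>. finite S \<longrightarrow> S \<subseteq> carrier Y \<longrightarrow> \<epsilon> > 0 \<longrightarrow>
      (\<exists>n \<phi> \<psi>. column_approximation A Y S \<epsilon> n \<phi> \<psi>))"
proof
  assume "hilbertian A Y"
  then obtain F where F: "F \<noteq> bot"
    and maps: "eventually (\<lambda>(n, \<phi>, \<psi>). n \<ge> 1 \<and> cc_module_map A Y (col_space A n) \<phi> \<and>
                                     cc_module_map A (col_space A n) Y \<psi>) F"
    and conv: "\<forall>y\<in>carrier Y. \<forall>\<epsilon>>0.
                 eventually (\<lambda>(n, \<phi>, \<psi>). vnorm Y (vdiff Y (\<psi> (\<phi> y)) y) < \<epsilon>) F"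
    unfolding hilbertian_def by blast
  show "\<forall>S \<epsilon>. finite S \<longrightarrow> S \<subseteq> carrier Y \<longrightarrow> \<epsilon> > 0 \<longrightarrow>
      (\<exists>n \<phi> \<psi>. column_approximation A Y S \<epsilon> n \<phi> \<psi>)"
  proof (intro allI impI)
    fix S and \<epsilon> :: real
    assume "finite S" "S \<subseteq> carrier Y" "\<epsilon> > 0"
    then have "eventually (\<lambda>t. \<forall>y\<in>S. (\<lambda>(n, \<phi>, \<psi>). vnorm Y (vdiff Y (\<psi> (\<phi> y)) y) < \<epsilon>) t) F"
      using conv by (intro eventually_ball_finite) auto
    with maps have "eventually (\<lambda>(n, \<phi>, \<psi>). column_approximation A Y S \<epsilon> n \<phi> \<psi>) F"
      by (rule eventually_elim2) (auto simp: column_approximation_def)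
    then obtain t where "case t of (n, \<phi>, \<psi>) \<Rightarrow> column_approximation A Y S \<epsilon> n \<phi> \<psi>"
      using eventually_happens'[OF F] by blast
    then show "\<exists>n \<phi> \<psi>. column_approximation A Y S \<epsilon> n \<phi> \<psi>"
      by (cases t) auto
  qed
next
  assume approx: "\<forall>S \<epsilon>. finite S \<longrightarrow> S \<subseteq> carrier Y \<longrightarrow> \<epsilon> > 0 \<longrightarrow>
      (\<exists>n \<phi> \<psi>. column_approximation A Y S \<epsilon> n \<phi> \<psi>)"
  have "\<exists>F. F \<noteq> bot \<and>
      eventually (\<lambda>(n, \<phi>, \<psi>). n \<ge> 1 \<and> cc_module_map A Y (col_space A n) \<phi> \<and>
                                 cc_module_map A (col_space A n) Y \<psi>) F \<and>
      (\<forall>k\<in>carrier Y \<times> {0<..}. eventually ((\<lambda>(y, \<epsilon>) (n, \<phi>, \<psi>). vnorm Y (vdiff Y (\<psi> (\<phi> y)) y) < \<epsilon>) k) F)"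
  proof (rule proper_filter_if_finite_intersection)
    fix C :: "('y \<times> real) set"
    assume C: "C \<subseteq> carrier Y \<times> {0<..}" "finite C"
    \<comment> \<open>inserting 1 keeps the minimum meaningful when C is empty\<close>
    define \<epsilon> :: real where "\<epsilon> = Min (insert 1 (snd ` C))"
    have "\<epsilon> > 0" using C by (auto simp: \<epsilon>_def)
    moreover have "finite (fst ` C)" "fst ` C \<subseteq> carrier Y" using C by auto
    ultimately obtain n \<phi> \<psi> where approx_C: "column_approximation A Y (fst ` C) \<epsilon> n \<phi> \<psi>"
      using approx by blast
    have "\<epsilon> \<le> e" if "(y, e) \<in> C" for y e
      using C(2) that unfolding \<epsilon>_def by (intro Min_le) force+
    then show "\<exists>b. (\<lambda>(n, \<phi>, \<psi>). n \<ge> 1 \<and> cc_module_map A Y (col_space A n) \<phi> \<and>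
                                 cc_module_map A (col_space A n) Y \<psi>) b \<and>
        (\<forall>k\<in>C. (\<lambda>(y, \<epsilon>) (n, \<phi>, \<psi>). vnorm Y (vdiff Y (\<psi> (\<phi> y)) y) < \<epsilon>) k b)"
      using approx_C unfolding column_approximation_def
      by (intro exI[of _ "(n, \<phi>, \<psi>)"]) (force simp: image_iff)
  qed
  then show "hilbertian A Y" unfolding hilbertian_def by auto
qed

lemma column_approximation_factor_through:
  assumes Y: "operator_space Y" and Z: "complex_vs Z"
    and \<phi>: "cc_module_map A Y Z \<phi>" and \<psi>: "cc_module_map A Z Y \<psi>"
    and S: "S \<subseteq> carrier Y" and close: "\<forall>y\<in>S. vnorm Y (vdiff Y (\<psi> (\<phi> y)) y) < \<delta>"
    and approx: "column_approximation A Z (\<phi> ` S) \<eta> n f g"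
  shows "column_approximation A Y S (\<delta> + \<eta>) n (f \<circ> \<phi>) (\<psi> \<circ> g)"
proof -
  have f: "cc_module_map A Z (col_space A n) f" and g: "cc_module_map A (col_space A n) Z g"
    and err: "\<forall>y\<in>S. vnorm Z (vdiff Z (g (f (\<phi> y))) (\<phi> y)) < \<eta>"
    using approx unfolding column_approximation_def by auto
  have "vnorm Y (vdiff Y (\<psi> (g (f (\<phi> y)))) y) < \<delta> + \<eta>" if y: "y \<in> S" for y
  proof -
    have y_Y: "y \<in> carrier Y" using S y by auto
    have \<phi>y: "\<phi> y \<in> carrier Z" using \<phi> y_Y by (rule cc_module_map_carrier)
    then have "g (f (\<phi> y)) \<in> carrier Z" using f g by (simp add: cc_module_map_carrier)
    then have "vnorm Y (vdiff Y (\<psi> (g (f (\<phi> y)))) y)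
        \<le> vnorm Z (vdiff Z (g (f (\<phi> y))) (\<phi> y)) + vnorm Y (vdiff Y (\<psi> (\<phi> y)) y)"
      using \<psi> unfolding cc_module_map_def by (intro completely_contractive_vnorm_vdiff_le[OF Y Z] \<phi>y y_Y) simp_all
    then show ?thesis using err close y by fastforce
  qed
  then show ?thesis
    using approx cc_module_map_comp[OF \<phi> f] cc_module_map_comp[OF g \<psi>]
    unfolding column_approximation_def by simp
qed

theorem proposition3p2:
  fixes A :: "'a opalg" and Y :: "('y, 'a) rmodule"
    and G :: "'i filter" and Ys :: "'i \<Rightarrow> ('z, 'a) rmodule"
    and \<phi> :: "'i \<Rightarrow> 'y \<Rightarrow> 'z" and \<psi> :: "'i \<Rightarrow> 'z \<Rightarrow> 'y"
  assumes "operator_algebra A" and "approx_unital A"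
    and "rmodule_over A Y"
    and "G \<noteq> bot"
    and "\<forall>i. rmodule_over A (Ys i) \<and> hilbertian A (Ys i)"
    and "\<forall>i. cc_module_map A Y (Ys i) (\<phi> i) \<and> cc_module_map A (Ys i) Y (\<psi> i)"
    and "\<forall>y\<in>carrier Y. \<forall>\<epsilon>>0. eventually (\<lambda>i. vnorm Y (vdiff Y (\<psi> i (\<phi> i y)) y) < \<epsilon>) G"
  shows "hilbertian A Y"
proof -
  have Y: "operator_space Y" using assms(3) by (rule rmodule_over_operator_space)
  show ?thesis
    unfolding hilbertian_iff_column_approximations
  proof (intro allI impI)
    fix S and \<epsilon> :: real
    assume S: "finite S" "S \<subseteq> carrier Y" and \<epsilon>: "\<epsilon> > 0"
    have "\<forall>y\<in>S. eventually (\<lambda>i. vnorm Y (vdiff Y (\<psi> i (\<phi> i y)) y) < \<epsilon>/2) G"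
      using assms(7) S(2) half_gt_zero[OF \<epsilon>] by blast
    then have "eventually (\<lambda>i. \<forall>y\<in>S. vnorm Y (vdiff Y (\<psi> i (\<phi> i y)) y) < \<epsilon>/2) G"
      by (rule eventually_ball_finite[OF S(1)])
    then obtain i where close: "\<forall>y\<in>S. vnorm Y (vdiff Y (\<psi> i (\<phi> i y)) y) < \<epsilon>/2"
      using eventually_happens'[OF assms(4)] by blast
    have Z: "operator_space (Ys i)" and \<phi>: "cc_module_map A Y (Ys i) (\<phi> i)"
      and \<psi>: "cc_module_map A (Ys i) Y (\<psi> i)"
      using assms(5,6) rmodule_over_operator_space by blast+
    have "\<phi> i ` S \<subseteq> carrier (Ys i)" using S(2) cc_module_map_carrier[OF \<phi>] by blast
    then obtain n f g where "column_approximation A (Ys i) (\<phi> i ` S) (\<epsilon>/2) n f g"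
      using assms(5) S(1) \<epsilon> hilbertian_iff_column_approximations by (metis finite_imageI half_gt_zero)
    then have "column_approximation A Y S (\<epsilon>/2 + \<epsilon>/2) n (f \<circ> \<phi> i) (\<psi> i \<circ> g)"
      using Z S(2) close
      by (intro column_approximation_factor_through[OF Y _ \<phi> \<psi>]) (simp_all add: operator_space_complex_vs)
    then show "\<exists>n \<phi> \<psi>. column_approximation A Y S \<epsilon> n \<phi> \<psi>" by auto
  qed
qed

end
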